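(* For every $j\in[N-1]$ and $\lambda\in\{0,1\}^N$ one has ${\bf s}_j(\mathbb{b}(\lambda))=\mathbb{b}(s_j\lambda)$, and, for the extension of ${\bf s}_j$ to $\mathbb{V}_N^{\mathrm{loc}}$, ${\bf s}_j(\mathbb{b}_\lambda)=\mathbb{b}_{s_j\lambda}$.
   Context: Fix $N\ge2$. $V=\mathbb{C}^2$ with basis $v_0,v_1$, ${\bf P}=\mathbb{C}[t_1,\dots,t_N]$, $\mathbb{V}_N=V^{\otimes N}\otimes{\bf P}$ with basis $v_\lambda$, $\lambda\in\{0,1\}^N$. Matrices on $V\otimes V$ are in the ordered basis $v_0\otimes v_0,v_0\otimes v_1,v_1\otimes v_0,v_1\otimes v_1$ (columns = images); $L(x,t)=\begin{pmatrix}1&0&0&0\\0&x+t&1&0\\0&1&0&0\\0&0&0&1\end{pmatrix}$. On $V[x]\otimes\mathbb{V}_N$ (factors $0,\dots,N$) let $M(x)=L_{0N}(x,t_N)\cdots L_{01}(x,t_1)$, $L_{0j}(x,t_j)$ acting as $L(x,t_j)$ on factors $0,j$ (factor $0$ first); define the ${\bf P}[x]$-linear operator $C(x)$ on $\mathbb{V}_N[x]$ by $M(x)(v_0\otimes w)=v_0\otimes A(x)w+v_1\otimes C(x)w$. For $\lambda\in\{0,1\}^N$ let $I_0=\{i_1<\dots<i_k\}=\{i:\lambda_i=0\}$ and $\mathbb{b}(\lambda)=C(-t_{i_1})\cdots C(-t_{i_k})v_{(1,\dots,1)}\in\mathbb{V}_N$. Let ${\bf P}^{\mathrm{loc}}={\bf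 P}[(t_a-t_b)^{-1}:a\ne b]$, $\mathbb{V}_N^{\mathrm{loc}}=V^{\otimes N}\otimes{\bf P}^{\mathrm{loc}}$, and $\mathbb{b}_\lambda=\prod_{b\in I_0,\,a\notin I_0}(t_a-t_b)^{-1}\,\mathbb{b}(\lambda)$. The operator ${\bf s}_j$ on $\mathbb{V}_N$ (and on $\mathbb{V}_N^{\mathrm{loc}}$) is defined by ${\bf s}_j(fv_\lambda)=s_j(f)\,(v_\lambda+(t_j-t_{j+1})v_{s_j\lambda})$ if $\lambda_j<\lambda_{j+1}$ and ${\bf s}_j(fv_\lambda)=s_j(f)v_\lambda$ otherwise, where $s_j\lambda$ swaps $\lambda_j,\lambda_{j+1}$ and $s_j(f)$ swaps $t_j,t_{j+1}$. *)

theory Defs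
  imports Complex_Main
begin

(* Basis index lambda in {0,1}^N: a bool list of length N, entry i (1-based) is lam!(i-1),
   False = 0, True = 1.  An element of V^{\<otimes>N} with coefficients in a ring of functions
   is represented pointwise: the variables t_1..t_N are a point t :: nat \<Rightarrow> complex
   (t i for i = 1..N), and a vector is a coefficient map bool list \<Rightarrow> complex. *)

type_synonym vec = "bool list \<Rightarrow> complex"
type_synonym vec0 = "bool \<times> bool list \<Rightarrow> complex"  (* V \<otimes> V^{\<otimes>N}, factor 0 first *)

definition basis :: "bool list \<Rightarrow> vec" where
  "basis lam = (\<lambda>mu. if mu = lam then 1 else 0)"

(* matrix entries of L(x,t) with y = x + t, row r, column c, in basis
   v0v0, v0v1, v1v0, v1v1 (columns = images) *)
definition Lent :: "complex \<Rightarrow> bool \<times> bool \<Rightarrow> bool \<times> bool \<Rightarrow> complex" where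
  "Lent y r c =
    (if c = (False, False) then (if r = (False, False) then 1 else 0)
     else if c = (False, True) then
       (if r = (False, True) then y else if r = (True, False) then 1 else 0)
     else if c = (True, False) then (if r = (False, True) then 1 else 0)
     else (if r = (True, True) then 1 else 0))"

(* L_{0j}(x,t_j), acting on factors 0 and j; y = x + t_j *)
definition Lop :: "complex \<Rightarrow> nat \<Rightarrow> vec0 \<Rightarrow> vec0" where
  "Lop y j W = (\<lambda>(b, mu). \<Sum>a\<in>UNIV. \<Sum>c\<in>UNIV.
      Lent y (b, mu ! (j - 1)) (a, c) * W (a, mu[j - 1 := c]))"

(* Mk k = L_{0k} ... L_{01};  M(x) = Mk N *)
fun Mk :: "complex \<Rightarrow> (nat \<Rightarrow> complex) \<Rightarrow> nat \<Rightarrow> vec0 \<Rightarrow> vec0" where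
  "Mk x t 0 W = W"
| "Mk x t (Suc k) W = Lop (x + t (Suc k)) (Suc k) (Mk x t k W)"

(* C(x) w defined by M(x)(v0 \<otimes> w) = v0 \<otimes> A(x) w + v1 \<otimes> C(x) w *)
definition Cop :: "nat \<Rightarrow> (nat \<Rightarrow> complex) \<Rightarrow> complex \<Rightarrow> vec \<Rightarrow> vec" where
  "Cop N t x w = (\<lambda>mu. Mk x t N (\<lambda>(a, lam). if a then 0 else w lam) (True, mu))"

definition I0 :: "bool list \<Rightarrow> nat list" where
  "I0 lam = filter (\<lambda>i. \<not> lam ! (i - 1)) [1..<length lam + 1]"

definition bb :: "nat \<Rightarrow> bool list \<Rightarrow> (nat \<Rightarrow> complex) \<Rightarrow> vec" where
  "bb N lam t = foldr (\<lambda>i w. Cop N t (- t i) w) (I0 lam) (basis (replicate N True))"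

(* normalized bb_lambda (element of the localization), at a point t with distinct coordinates *)
definition bbn :: "nat \<Rightarrow> bool list \<Rightarrow> (nat \<Rightarrow> complex) \<Rightarrow> vec" where
  "bbn N lam t = (\<lambda>mu. inverse (\<Prod>(a, b)\<in>{(a, b). a \<in> {1..N} \<and> b \<in> {1..N}
        \<and> \<not> lam ! (b - 1) \<and> lam ! (a - 1)}. (t a - t b)) * bb N lam t mu)"

definition swapt :: "nat \<Rightarrow> (nat \<Rightarrow> complex) \<Rightarrow> (nat \<Rightarrow> complex)" where
  "swapt j t = t(j := t (j + 1), j + 1 := t j)"

definition swapl :: "nat \<Rightarrow> bool list \<Rightarrow> bool list" where
  "swapl j lam = lam[j - 1 := lam ! j, j := lam ! (j - 1)]"

(* the operator s_j on a vector-valued function F of t: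
   s_j(f v_lam) = s_j(f) (v_lam + (t_j - t_{j+1}) v_{s_j lam}) if lam_j < lam_{j+1},
   s_j(f) v_lam otherwise *)
definition sop :: "nat \<Rightarrow> ((nat \<Rightarrow> complex) \<Rightarrow> vec) \<Rightarrow> ((nat \<Rightarrow> complex) \<Rightarrow> vec)" where
  "sop j F = (\<lambda>t mu. F (swapt j t) mu
      + (if mu ! (j - 1) \<and> \<not> mu ! j
         then (t j - t (j + 1)) * F (swapt j t) (swapl j mu) else 0))"

end

theory Submission
  imports Defs "HOL-Combinatorics.Transposition" "HOL-Library.Multiset"
begin

text \<open>The operator s_j is the R-matrix Rchk(t_j - t_{j+1}) on the factors j, j+1, composed
  with the swap of t_j and t_{j+1}. The RLL relation
    Rchk(s - r) L_{0,j+1}(x + s) L_{0j}(x + r) = L_{0,j+1}(x + r) L_{0j}(x + s) Rchk(s - r),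
  together with the fact that Rchk commutes with the other L_{0k}, shows that s_j commutes with
  C(x) for every fixed x. Since s_j fixes v_{(1,...,1)} and turns t_i into t_{s_j(i)}, the vector
  s_j b(\<lambda>) is the product of the C(-t_i) over i in s_j(I_0(\<lambda>)) = I_0(s_j \<lambda>), possibly in another
  order. The C(x) commute with each other by the same RLL relation, now with the R-matrix on
  two auxiliary spaces. Finally, s_j merely permutes the factors of the normalising product.\<close>

lemma Lop_apply:
  "Lop y j W (b, mu) =
    (if b then (if mu ! (j - 1) then W (True, mu[j - 1 := True]) else W (False, mu[j - 1 := True]))
     else if mu ! (j - 1) then y * W (False, mu[j - 1 := True]) + W (True, mu[j - 1 := False])
     else W (False, mu[j - 1 := False]))"
  unfolding Lop_def Lent_def by (simp add: UNIV_bool)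

text \<open>Vectors are functions on all bool lists, but only lists of length N are meaningful: the
  relations below hold only there, since \<open>nth\<close> and \<open>swapl\<close> return junk on shorter lists.\<close>

lemma Lop_cong:
  assumes "\<And>a nu. length nu = n \<Longrightarrow> V (a, nu) = U (a, nu)" and "length mu = n"
  shows "Lop y k V (b, mu) = Lop y k U (b, mu)"
  using assms by (simp add: Lop_apply)

lemma Mk_cong:
  assumes "\<And>a nu. length nu = n \<Longrightarrow> V (a, nu) = U (a, nu)" and "length mu = n"
  shows "Mk x t k V (b, mu) = Mk x t k U (b, mu)"
  using assms(2)
proof (induction k arbitrary: b mu)
  case 0
  then show ?case using assms(1) by simp
next
  case (Suc k)
  have "Lop (x + t (Suc k)) (Suc k) (Mk x t k V) (b, mu) = Lop (x + t (Suc k)) (Suc k) (Mk x t k U) (b, mu)"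
    by (rule Lop_cong[where n = n]) (use Suc in auto)
  then show ?case by simp
qed

lemma Mk_cong_points:
  "(\<And>i. 1 \<le> i \<Longrightarrow> i \<le> k \<Longrightarrow> t' i = t i) \<Longrightarrow> Mk x t' k W = Mk x t k W"
  by (induction k) auto

lemma Lop_zero: "Lop y k (\<lambda>_. 0) = (\<lambda>_. 0)"
  unfolding Lop_def by auto

lemma Mk_zero: "Mk x t k (\<lambda>_. 0) = (\<lambda>_. 0)"
  by (induction k) (simp_all add: Lop_zero)

definition embed0 :: "vec \<Rightarrow> vec0" where
  "embed0 w = (\<lambda>(a, mu). if a then 0 else w mu)"

lemma Cop_eq_Mk_embed0: "Cop N t x w = (\<lambda>mu. Mk x t N (embed0 w) (True, mu))"
  unfolding Cop_def embed0_def by simp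

lemma Cop_cong:
  assumes "\<And>nu. length nu = n \<Longrightarrow> v nu = w nu" and "length mu = n"
  shows "Cop n t x v mu = Cop n t x w mu"
  unfolding Cop_eq_Mk_embed0 by (rule Mk_cong[where n = n]) (use assms in \<open>auto simp: embed0_def\<close>)

text \<open>On coefficient maps, \<open>Rchk j c\<close> is the operator v_\<lambda> \<mapsto> v_\<lambda> + c v_{s_j \<lambda>} for
  \<lambda>_j < \<lambda>_{j+1}, and the identity on the other basis vectors.\<close>

definition Rchk :: "nat \<Rightarrow> complex \<Rightarrow> vec \<Rightarrow> vec" where
  "Rchk j c w = (\<lambda>mu. w mu + (if mu ! (j - 1) \<and> \<not> mu ! j then c * w (swapl j mu) else 0))"

definition Rchk0 :: "nat \<Rightarrow> complex \<Rightarrow> vec0 \<Rightarrow> vec0" where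
  "Rchk0 j c V = (\<lambda>(a, mu). Rchk j c (\<lambda>nu. V (a, nu)) mu)"

lemma Rchk0_apply:
  "Rchk0 j c V (a, mu) = V (a, mu) + (if mu ! (j - 1) \<and> \<not> mu ! j then c * V (a, swapl j mu) else 0)"
  unfolding Rchk0_def Rchk_def by simp

lemma sop_eq_Rchk: "sop j F t = Rchk j (t j - t (j + 1)) (F (swapt j t))"
  unfolding sop_def Rchk_def by simp

lemma Rchk0_embed0: "Rchk0 j c (embed0 w) = embed0 (Rchk j c w)"
  unfolding Rchk0_def Rchk_def embed0_def by auto

lemma Rchk0_Lop_commute:
  assumes "1 \<le> j" and "1 \<le> k" and "k \<noteq> j" and "k \<noteq> j + 1"
  shows "Rchk0 j c (Lop y k W) = Lop y k (Rchk0 j c W)"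
proof (rule ext, clarify)
  fix b mu
  obtain i m where "j = Suc i" and "k = Suc m" and "m \<noteq> i" and "m \<noteq> Suc i"
    using assms by (cases j; cases k) auto
  then show "Rchk0 j c (Lop y k W) (b, mu) = Lop y k (Rchk0 j c W) (b, mu)"
    by (cases b; cases "mu ! i"; cases "mu ! Suc i"; cases "mu ! m")
      (simp_all add: Lop_apply Rchk0_apply swapl_def list_update_swap algebra_simps)
qed

lemma Rchk0_Lop_Lop:
  assumes "1 \<le> j" and "j < length mu"
  shows "Rchk0 j (s - r) (Lop (x + s) (j + 1) (Lop (x + r) j W)) (b, mu)
       = Lop (x + r) (j + 1) (Lop (x + s) j (Rchk0 j (s - r) W)) (b, mu)"
proof -
  obtain i where i: "j = Suc i" and "Suc i < length mu"
    using assms by (cases j) auto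
  then show ?thesis unfolding i
    by (cases b; cases "mu ! i"; cases "mu ! Suc i")
      (simp_all add: Lop_apply Rchk0_apply swapl_def list_update_swap algebra_simps)
qed

lemma Rchk0_Mk_commute:
  "1 \<le> j \<Longrightarrow> k < j \<Longrightarrow> Rchk0 j c (Mk x t k W) = Mk x t k (Rchk0 j c W)"
  by (induction k) (auto simp: Rchk0_Lop_commute)

lemma Rchk0_Mk_swapt:
  assumes "1 \<le> j" and "j < n" and "length mu = n" and "j + 1 \<le> k"
  shows "Rchk0 j (t j - t (j + 1)) (Mk x (swapt j t) k W) (b, mu)
       = Mk x t k (Rchk0 j (t j - t (j + 1)) W) (b, mu)"
  using assms(4,3)
proof (induction k arbitrary: b mu rule: dec_induct)
  case base
  obtain i where i: "j = Suc i" using assms by (cases j) auto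
  have below: "Mk x (swapt j t) i W = Mk x t i W"
    by (rule Mk_cong_points) (auto simp: swapt_def i)
  have "Rchk0 j (t j - t (j + 1)) (Mk x (swapt j t) (j + 1) W) (b, mu)
      = Rchk0 j (t j - t (j + 1)) (Lop (x + t j) (j + 1) (Lop (x + t (j + 1)) j (Mk x t i W))) (b, mu)"
    using below by (simp add: i swapt_def)
  also have "\<dots> = Lop (x + t (j + 1)) (j + 1) (Lop (x + t j) j (Rchk0 j (t j - t (j + 1)) (Mk x t i W))) (b, mu)"
    by (rule Rchk0_Lop_Lop) (use assms base in auto)
  also have "\<dots> = Mk x t (j + 1) (Rchk0 j (t j - t (j + 1)) W) (b, mu)"
    using Rchk0_Mk_commute[of j i] by (simp add: i)
  finally show ?case .
next
  case (step k)
  have "Rchk0 j (t j - t (j + 1)) (Mk x (swapt j t) (Suc k) W) (b, mu)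
      = Lop (x + t (Suc k)) (Suc k) (Rchk0 j (t j - t (j + 1)) (Mk x (swapt j t) k W)) (b, mu)"
    using step assms by (simp add: swapt_def Rchk0_Lop_commute)
  also have "\<dots> = Lop (x + t (Suc k)) (Suc k) (Mk x t k (Rchk0 j (t j - t (j + 1)) W)) (b, mu)"
    by (rule Lop_cong[where n = n]) (use step in auto)
  finally show ?case by simp
qed

lemma Rchk_Cop_swapt:
  assumes "1 \<le> j" and "j < n" and "length mu = n"
  shows "Rchk j (t j - t (j + 1)) (Cop n (swapt j t) x w) mu = Cop n t x (Rchk j (t j - t (j + 1)) w) mu"
proof -
  have "Rchk j (t j - t (j + 1)) (Cop n (swapt j t) x w) mu
      = Rchk0 j (t j - t (j + 1)) (Mk x (swapt j t) n (embed0 w)) (True, mu)"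
    by (simp add: Rchk_def Rchk0_apply Cop_eq_Mk_embed0)
  also have "\<dots> = Mk x t n (Rchk0 j (t j - t (j + 1)) (embed0 w)) (True, mu)"
    by (rule Rchk0_Mk_swapt) (use assms in auto)
  finally show ?thesis by (simp add: Rchk0_embed0 Cop_eq_Mk_embed0)
qed

type_synonym vec00 = "bool \<times> bool \<times> bool list \<Rightarrow> complex"

definition Lop_fst :: "complex \<Rightarrow> nat \<Rightarrow> vec00 \<Rightarrow> vec00" where
  "Lop_fst y k V = (\<lambda>(a, a', mu). Lop y k (\<lambda>(b, nu). V (b, a', nu)) (a, mu))"

definition Lop_snd :: "complex \<Rightarrow> nat \<Rightarrow> vec00 \<Rightarrow> vec00" where
  "Lop_snd y k V = (\<lambda>(a, a', mu). Lop y k (\<lambda>(b, nu). V (a, b, nu)) (a', mu))"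

definition Mk_fst :: "complex \<Rightarrow> (nat \<Rightarrow> complex) \<Rightarrow> nat \<Rightarrow> vec00 \<Rightarrow> vec00" where
  "Mk_fst x t k V = (\<lambda>(a, a', mu). Mk x t k (\<lambda>(b, nu). V (b, a', nu)) (a, mu))"

definition Mk_snd :: "complex \<Rightarrow> (nat \<Rightarrow> complex) \<Rightarrow> nat \<Rightarrow> vec00 \<Rightarrow> vec00" where
  "Mk_snd x t k V = (\<lambda>(a, a', mu). Mk x t k (\<lambda>(b, nu). V (a, b, nu)) (a', mu))"

fun Mk_pair :: "complex \<Rightarrow> complex \<Rightarrow> (nat \<Rightarrow> complex) \<Rightarrow> nat \<Rightarrow> vec00 \<Rightarrow> vec00" where
  "Mk_pair x y t 0 V = V"
| "Mk_pair x y t (Suc k) V =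
     Lop_fst (x + t (Suc k)) (Suc k) (Lop_snd (y + t (Suc k)) (Suc k) (Mk_pair x y t k V))"

definition Rchk00 :: "complex \<Rightarrow> vec00 \<Rightarrow> vec00" where
  "Rchk00 c V = (\<lambda>(a, a', mu). V (a, a', mu) + (if a \<and> \<not> a' then c * V (False, True, mu) else 0))"

definition embed00 :: "vec \<Rightarrow> vec00" where
  "embed00 w = (\<lambda>(a, a', mu). if a \<or> a' then 0 else w mu)"

lemma Mk_fst_0: "Mk_fst x t 0 V = V"
  unfolding Mk_fst_def by auto

lemma Mk_fst_Suc: "Mk_fst x t (Suc k) V = Lop_fst (x + t (Suc k)) (Suc k) (Mk_fst x t k V)"
  unfolding Mk_fst_def Lop_fst_def by (auto simp: case_prod_beta')

lemma Mk_snd_Suc: "Mk_snd x t (Suc k) V = Lop_snd (x + t (Suc k)) (Suc k) (Mk_snd x t k V)"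
  unfolding Mk_snd_def Lop_snd_def by (auto simp: case_prod_beta')

lemma Lop_fst_Lop_snd_commute:
  assumes "1 \<le> m" and "1 \<le> k" and "m \<noteq> k"
  shows "Lop_fst y m (Lop_snd z k V) = Lop_snd z k (Lop_fst y m V)"
proof (rule ext, clarify)
  fix a a' mu
  obtain i l where "m = Suc i" and "k = Suc l" and "i \<noteq> l"
    using assms by (cases m; cases k) auto
  then show "Lop_fst y m (Lop_snd z k V) (a, a', mu) = Lop_snd z k (Lop_fst y m V) (a, a', mu)"
    unfolding Lop_fst_def Lop_snd_def
    by (cases a; cases a'; cases "mu ! i"; cases "mu ! l") (simp_all add: Lop_apply list_update_swap algebra_simps)
qed

lemma Mk_fst_Lop_snd_commute: "k < m \<Longrightarrow> Mk_fst x t k (Lop_snd z m V) = Lop_snd z m (Mk_fst x t k V)"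
  by (induction k) (simp_all add: Mk_fst_0 Mk_fst_Suc Lop_fst_Lop_snd_commute)

lemma Mk_fst_Mk_snd: "Mk_fst x t k (Mk_snd y t k V) = Mk_pair x y t k V"
proof (induction k)
  case 0
  then show ?case by (simp add: Mk_fst_0 Mk_snd_def case_prod_beta')
next
  case (Suc k)
  then show ?case by (simp add: Mk_fst_Suc Mk_snd_Suc Mk_fst_Lop_snd_commute)
qed

lemma Rchk00_Lop_Lop:
  assumes "1 \<le> k" and "k \<le> length mu"
  shows "Rchk00 (x - y) (Lop_fst (x + s) k (Lop_snd (y + s) k V)) (a, a', mu)
       = Lop_fst (y + s) k (Lop_snd (x + s) k (Rchk00 (x - y) V)) (a, a', mu)"
proof -
  obtain i where i: "k = Suc i" and "i < length mu"
    using assms by (cases k) auto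
  then show ?thesis unfolding i Lop_fst_def Lop_snd_def Rchk00_def
    by (cases a; cases a'; cases "mu ! i") (simp_all add: Lop_apply algebra_simps)
qed

lemma Rchk00_Mk_pair:
  assumes "k \<le> length mu"
  shows "Rchk00 (x - y) (Mk_pair x y t k V) (a, a', mu) = Mk_pair y x t k (Rchk00 (x - y) V) (a, a', mu)"
  using assms
proof (induction k arbitrary: a a' mu)
  case 0
  then show ?case by simp
next
  case (Suc k)
  have "Rchk00 (x - y) (Mk_pair x y t (Suc k) V) (a, a', mu)
      = Lop_fst (y + t (Suc k)) (Suc k) (Lop_snd (x + t (Suc k)) (Suc k) (Rchk00 (x - y) (Mk_pair x y t k V))) (a, a', mu)"
    using Rchk00_Lop_Lop[of "Suc k" mu] Suc.prems by simp
  also have "\<dots> = Lop_fst (y + t (Suc k)) (Suc k) (Lop_snd (x + t (Suc k)) (Suc k) (Mk_pair y x t k (Rchk00 (x - y) V))) (a, a', mu)"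
    unfolding Lop_fst_def Lop_snd_def using Suc by (simp add: Lop_apply)
  finally show ?case by simp
qed

lemma Cop_Cop_eq_Mk_pair: "Cop n t x (Cop n t y w) mu = Mk_pair x y t n (embed00 w) (True, True, mu)"
proof -
  have inner: "(\<lambda>(b, nu). Mk_snd y t n (embed00 w) (b, True, nu)) = embed0 (Cop n t y w)"
  proof (rule ext, clarify)
    fix b nu
    have "(\<lambda>(b', nu'). embed00 w (True, b', nu')) = (\<lambda>_. 0)"
      and "(\<lambda>(b', nu'). embed00 w (False, b', nu')) = embed0 w"
      by (auto simp: embed00_def embed0_def)
    then show "Mk_snd y t n (embed00 w) (b, True, nu) = embed0 (Cop n t y w) (b, nu)"
      by (cases b) (simp_all add: Mk_snd_def embed0_def Mk_zero Cop_eq_Mk_embed0)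
  qed
  have "Mk_pair x y t n (embed00 w) (True, True, mu) = Mk_fst x t n (Mk_snd y t n (embed00 w)) (True, True, mu)"
    by (simp add: Mk_fst_Mk_snd)
  also have "\<dots> = Mk x t n (embed0 (Cop n t y w)) (True, mu)"
    unfolding Mk_fst_def using inner by simp
  finally show ?thesis by (simp add: Cop_eq_Mk_embed0)
qed

lemma Cop_commute:
  assumes "length mu = n"
  shows "Cop n t x (Cop n t y w) mu = Cop n t y (Cop n t x w) mu"
proof -
  have fixed: "Rchk00 (x - y) (embed00 w) = embed00 w"
    by (auto simp: Rchk00_def embed00_def)
  have "Cop n t y (Cop n t x w) mu = Mk_pair y x t n (Rchk00 (x - y) (embed00 w)) (True, True, mu)"
    by (simp add: Cop_Cop_eq_Mk_pair fixed)
  also have "\<dots> = Rchk00 (x - y) (Mk_pair x y t n (embed00 w)) (True, True, mu)"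
    using Rchk00_Mk_pair[of n mu] assms by simp
  also have "\<dots> = Cop n t x (Cop n t y w) mu"
    by (simp add: Rchk00_def Cop_Cop_eq_Mk_pair)
  finally show ?thesis by simp
qed

lemma Rchk_foldr_Cop_swapt:
  assumes "1 \<le> j" and "j < N" and "length mu = N"
  shows "Rchk j (t j - t (j + 1)) (foldr (\<lambda>i. Cop N (swapt j t) (g i)) is w) mu
       = foldr (\<lambda>i. Cop N t (g i)) is (Rchk j (t j - t (j + 1)) w) mu"
  using assms(3)
proof (induction "is" arbitrary: mu)
  case Nil
  then show ?case by simp
next
  case (Cons i "is")
  have "Rchk j (t j - t (j + 1)) (foldr (\<lambda>i. Cop N (swapt j t) (g i)) (i # is) w) mu
      = Cop N t (g i) (Rchk j (t j - t (j + 1)) (foldr (\<lambda>i. Cop N (swapt j t) (g i)) is w)) mu"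
    using Rchk_Cop_swapt[OF assms(1,2) Cons.prems] by simp
  also have "\<dots> = foldr (\<lambda>i. Cop N t (g i)) (i # is) (Rchk j (t j - t (j + 1)) w) mu"
    by simp (rule Cop_cong[where n = N], use Cons in auto)
  finally show ?case .
qed

lemma Cop_foldr_Cop_commute:
  assumes "length mu = N"
  shows "Cop N t x (foldr (\<lambda>i. Cop N t (g i)) is w) mu = foldr (\<lambda>i. Cop N t (g i)) is (Cop N t x w) mu"
  using assms
proof (induction "is" arbitrary: mu)
  case Nil
  then show ?case by simp
next
  case (Cons i "is")
  have "Cop N t x (foldr (\<lambda>i. Cop N t (g i)) (i # is) w) mu
      = Cop N t (g i) (Cop N t x (foldr (\<lambda>i. Cop N t (g i)) is w)) mu"
    using Cop_commute Cons.prems by simp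
  also have "\<dots> = Cop N t (g i) (foldr (\<lambda>i. Cop N t (g i)) is (Cop N t x w)) mu"
    by (rule Cop_cong[where n = N]) (use Cons in auto)
  finally show ?case by simp
qed

lemma foldr_Cop_mset_eq:
  assumes "mset is = mset js" and "length mu = N"
  shows "foldr (\<lambda>i. Cop N t (g i)) is w mu = foldr (\<lambda>i. Cop N t (g i)) js w mu"
  using assms
proof (induction "is" arbitrary: js mu)
  case Nil
  then show ?case by simp
next
  case (Cons i "is")
  let ?C = "\<lambda>i. Cop N t (g i)"
  have "i \<in> set js"
    using Cons.prems(1) by (metis list.set_intros(1) mset_eq_setD)
  then obtain js1 js2 where js: "js = js1 @ i # js2"
    by (meson split_list)
  have "mset is = mset (js1 @ js2)"
    using Cons.prems(1) js by simp
  note IH = Cons.IH[OF this]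
  have "foldr ?C (i # is) w mu = Cop N t (g i) (foldr ?C (js1 @ js2) w) mu"
    by simp (rule Cop_cong[where n = N], use IH Cons.prems(2) in auto)
  also have "\<dots> = foldr ?C js1 (Cop N t (g i) (foldr ?C js2 w)) mu"
    using Cop_foldr_Cop_commute Cons.prems(2) by simp
  finally show ?case by (simp add: js)
qed

lemma Rchk_basis_ones:
  assumes "1 \<le> j" and "j < N"
  shows "Rchk j c (basis (replicate N True)) = basis (replicate N True)"
proof -
  have "swapl j mu \<noteq> replicate N True" if "\<not> mu ! j" for mu
  proof
    assume ones: "swapl j mu = replicate N True"
    then have "length mu = N"
      by (metis length_list_update length_replicate swapl_def)
    then have "swapl j mu ! (j - 1) = mu ! j"
      using assms by (simp add: swapl_def nth_list_update)
    with ones that assms show False by simp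
  qed
  then show ?thesis unfolding Rchk_def basis_def by auto
qed

lemma swapt_eq_comp_transpose: "swapt j t = t \<circ> transpose j (j + 1)"
  by (auto simp: swapt_def transpose_def)

lemma nth_swapl:
  assumes "1 \<le> j" and "j < length lam" and "i \<in> {1..length lam}"
  shows "swapl j lam ! (i - 1) = lam ! (transpose j (j + 1) i - 1)"
  using assms unfolding swapl_def transpose_def by (auto simp: nth_list_update)

lemma transpose_mem_atLeastAtMost:
  "1 \<le> j \<Longrightarrow> j < N \<Longrightarrow> transpose j (j + 1) i \<in> {1..N} \<longleftrightarrow> (i :: nat) \<in> {1..N}"
  by (auto simp: transpose_def)

lemma set_I0: "set (I0 lam) = {i \<in> {1..length lam}. \<not> lam ! (i - 1)}"
  unfolding I0_def by auto

lemma distinct_I0: "distinct (I0 lam)"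
  unfolding I0_def by simp

lemma mset_I0_swapl:
  assumes "1 \<le> j" and "j < length lam"
  shows "mset (I0 (swapl j lam)) = mset (map (transpose j (j + 1)) (I0 lam))"
proof -
  have "i \<in> set (I0 (swapl j lam)) \<longleftrightarrow> transpose j (j + 1) i \<in> set (I0 lam)" for i
    using nth_swapl[OF assms, of i] transpose_mem_atLeastAtMost[OF assms, of i]
    by (auto simp: set_I0 swapl_def)
  then have "set (I0 (swapl j lam)) = transpose j (j + 1) -` set (I0 lam)"
    by auto
  also have "\<dots> = transpose j (j + 1) ` set (I0 lam)"
    by (simp add: bij_vimage_eq_inv_image)
  finally show ?thesis
    using set_eq_iff_mset_eq_distinct[of "I0 (swapl j lam)" "map (transpose j (j + 1)) (I0 lam)"]
    by (simp add: distinct_I0 distinct_map)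
qed

lemma sop_bb:
  assumes "1 \<le> j" and "j < N" and "length lam = N" and "length mu = N"
  shows "sop j (bb N lam) t mu = bb N (swapl j lam) t mu"
proof -
  let ?e = "basis (replicate N True)"
  let ?C = "\<lambda>i. Cop N t (- t i)"
  have "sop j (bb N lam) t mu
      = Rchk j (t j - t (j + 1)) (foldr (\<lambda>i. Cop N (swapt j t) (- swapt j t i)) (I0 lam) ?e) mu"
    by (simp add: sop_eq_Rchk bb_def)
  also have "\<dots> = foldr (\<lambda>i. Cop N t (- swapt j t i)) (I0 lam) (Rchk j (t j - t (j + 1)) ?e) mu"
    by (rule Rchk_foldr_Cop_swapt) (use assms in auto)
  also have "\<dots> = foldr ?C (map (transpose j (j + 1)) (I0 lam)) ?e mu"
    using assms by (simp add: Rchk_basis_ones foldr_map swapt_eq_comp_transpose o_def)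
  also have "\<dots> = foldr ?C (I0 (swapl j lam)) ?e mu"
    by (rule foldr_Cop_mset_eq) (use assms mset_I0_swapl in auto)
  finally show ?thesis by (simp add: bb_def)
qed

definition cross_pairs :: "nat \<Rightarrow> bool list \<Rightarrow> (nat \<times> nat) set" where
  "cross_pairs N lam = {(a, b). a \<in> {1..N} \<and> b \<in> {1..N} \<and> \<not> lam ! (b - 1) \<and> lam ! (a - 1)}"

lemma bbn_eq_cross_pairs: "bbn N lam t mu = inverse (\<Prod>(a, b)\<in>cross_pairs N lam. t a - t b) * bb N lam t mu"
  unfolding bbn_def cross_pairs_def by simp

lemma mem_cross_pairs_swapl:
  assumes "1 \<le> j" and "j < N" and "length lam = N"
  shows "p \<in> cross_pairs N (swapl j lam)
     \<longleftrightarrow> map_prod (transpose j (j + 1)) (transpose j (j + 1)) p \<in> cross_pairs N lam"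
  using assms nth_swapl[of j lam] transpose_mem_atLeastAtMost[of j N]
  by (cases p) (auto simp: cross_pairs_def)

lemma prod_cross_pairs_swapl:
  assumes "1 \<le> j" and "j < N" and "length lam = N"
  shows "(\<Prod>(a, b)\<in>cross_pairs N lam. swapt j t a - swapt j t b) = (\<Prod>(a, b)\<in>cross_pairs N (swapl j lam). t a - t b)"
proof -
  let ?h = "map_prod (transpose j (j + 1)) (transpose j (j + 1))"
  have "?h (?h p) = p" for p
    by (cases p) simp
  then show ?thesis
    by (intro prod.reindex_bij_witness[where i = ?h and j = ?h])
      (auto simp: mem_cross_pairs_swapl[OF assms] swapt_eq_comp_transpose)
qed

lemma sop_bbn:
  assumes "1 \<le> j" and "j < N" and "length lam = N" and "length mu = N"
  shows "sop j (bbn N lam) t mu = bbn N (swapl j lam) t mu"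
proof -
  have "sop j (bbn N lam) t mu
      = inverse (\<Prod>(a, b)\<in>cross_pairs N lam. swapt j t a - swapt j t b) * sop j (bb N lam) t mu"
    unfolding sop_def bbn_eq_cross_pairs by (simp add: algebra_simps)
  then show ?thesis
    using sop_bb[OF assms] prod_cross_pairs_swapl[OF assms(1-3)] by (simp add: bbn_eq_cross_pairs)
qed

theorem proposition2p13:
  fixes N j :: nat and lam :: "bool list"
  assumes "N \<ge> 2" and "1 \<le> j" and "j \<le> N - 1" and "length lam = N"
  shows "(\<forall>t mu. length mu = N \<longrightarrow>
            sop j (bb N lam) t mu = bb N (swapl j lam) t mu)
       \<and> (\<forall>t mu. inj_on t {1..N} \<longrightarrow> length mu = N \<longrightarrow>
            sop j (bbn N lam) t mu = bbn N (swapl j lam) t mu)"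
proof -
  have "j < N" using assms by simp
  then show ?thesis using sop_bb sop_bbn assms by blast
qed

end
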